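(* Let $\mathcal{K}=\mathbb{F}_q((t))$, $\mathcal{O}=\mathbb{F}_q[[t]]$, $G=PGL(2,\mathcal{K})$, and fix an integer $k\ge 1$. Let $I^0=\left\{\begin{pmatrix}1+ta & b\\ tc & 1+td\end{pmatrix} : a,b,c,d\in\mathcal{O}\right\}$, let $A\subset G$ be the subgroup generated by $I^0$ and $\sigma=\begin{pmatrix}0&1\\ t&0\end{pmatrix}$, let $\psi:\mathbb{F}_q\to\mathbb{C}^\times$ be a nontrivial additive character and let $\chi:A\to\mathbb{C}^\times$ be the character given on $I^0$ by $\chi\left(\begin{pmatrix}1+ta & b\\ tc & 1+td\end{pmatrix}\right)=\psi(b_0+c_0)$ and with $\chi(\sigma)=1$. Let the group $1+t^k\mathcal{O}$ act on $G$ on the left by $g\mapsto\begin{pmatrix}z&0\\0&1\end{pmatrix}g$, and $A$ act on the right by multiplication. Call a $(1+t^k\mathcal{O})\times A$-orbit in $G$ relevant if it supports a nonzero function $f$ with $f\left(\begin{pmatrix}z&0\\0&1\end{pmatrix}g\,a\right)=\chi(a)f(g)$ for all $z\in 1+t^k\mathcal{O}$, $a\in A$. For each $n\in\mathbb{Z}$ let $R_{n,k}$ be the set of matrices $$\begin{pmatrix}a_nt^n & b_{n-k+1}t^{n-k+1}+\dots+b_{n-1}t^{n-1}\\ 0&1\end{pmatrix},\qquad a_n\in\mathbb{F}_q^\times,\ b_i\in\mathbb{F}_q,$$ and let $R=\bigcup_{n\in\mathbb{Z}}R_{n,k}$. Then $R$ contains exactly one representative of every relevant $(1+t^k\mathcal{O})\times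 A$-orbit in $G$.
   Context: For $x\in\mathcal{O}$, $x_i$ denotes the coefficient of $t^i$ in $x$. *)

theory Defs
  imports Complex_Main "HOL-Computational_Algebra.Formal_Laurent_Series"
    "HOL-Algebra.Generated_Groups"
begin

text \<open>2x2 matrices over a commutative ring, stored row-major as (a, b, c, d)
  for the matrix with rows (a b) and (c d).\<close>
type_synonym 'a mat2 = "'a \<times> 'a \<times> 'a \<times> 'a"

definition m2mul :: "'a::comm_ring_1 mat2 \<Rightarrow> 'a mat2 \<Rightarrow> 'a mat2" where
  "m2mul M N = (case M of (a, b, c, d) \<Rightarrow> case N of (e, f, g, h) \<Rightarrow>
      (a*e + b*g, a*f + b*h, c*e + d*g, c*f + d*h))"

definition m2det :: "'a::comm_ring_1 mat2 \<Rightarrow> 'a" where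
  "m2det M = (case M of (a, b, c, d) \<Rightarrow> a*d - b*c)"

definition m2smult :: "'a::comm_ring_1 \<Rightarrow> 'a mat2 \<Rightarrow> 'a mat2" where
  "m2smult s M = (case M of (a, b, c, d) \<Rightarrow> (s*a, s*b, s*c, s*d))"

text \<open>The class of a matrix in PGL(2): all its nonzero scalar multiples.\<close>
definition pcls :: "'a::field mat2 \<Rightarrow> 'a mat2 set" where
  "pcls M = {m2smult s M | s. s \<noteq> 0}"

definition PGL2 :: "'a::field mat2 set monoid" where
  "PGL2 = \<lparr> carrier = {pcls M | M. m2det M \<noteq> 0},
            mult = (\<lambda>X Y. {m2mul x y | x y. x \<in> X \<and> y \<in> Y}),
            one = pcls (1, 0, 0, 1) \<rparr>"

text \<open>Laurent series: K = F((t)), O = F[[t]] inside K, t = fls_X.\<close>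
definition Ocal :: "'a::field fls set" where
  "Ocal = {x. \<forall>n<0. fls_nth x n = 0}"

definition Ucal :: "nat \<Rightarrow> 'a::field fls set" where
  "Ucal k = {1 + fls_X ^ k * y | y. y \<in> Ocal}"

definition I0 :: "'a::field fls mat2 set set" where
  "I0 = {pcls (1 + fls_X * a, b, fls_X * c, 1 + fls_X * d) | a b c d.
          a \<in> Ocal \<and> b \<in> Ocal \<and> c \<in> Ocal \<and> d \<in> Ocal}"

definition sigma :: "'a::field fls mat2 set" where
  "sigma = pcls (0, 1, fls_X, 0)"

definition Agrp :: "'a::field fls mat2 set set" where
  "Agrp = generate PGL2 (insert sigma I0)"

definition dg :: "'a::field fls \<Rightarrow> 'a fls mat2 set" where
  "dg z = pcls (z, 0, 0, 1)"

definition orbitk :: "nat \<Rightarrow> 'a::field fls mat2 set \<Rightarrow> 'a fls mat2 set set" where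
  "orbitk k g = {dg z \<otimes>\<^bsub>PGL2\<^esub> g \<otimes>\<^bsub>PGL2\<^esub> a | z a. z \<in> Ucal k \<and> a \<in> Agrp}"

definition relevant ::
  "nat \<Rightarrow> ('a::field fls mat2 set \<Rightarrow> complex) \<Rightarrow> 'a fls mat2 set set \<Rightarrow> bool" where
  "relevant k chi Orb \<longleftrightarrow>
     (\<exists>g \<in> carrier PGL2. Orb = orbitk k g) \<and>
     (\<exists>f :: 'a fls mat2 set \<Rightarrow> complex.
        (\<exists>x \<in> Orb. f x \<noteq> 0) \<and> (\<forall>x. x \<notin> Orb \<longrightarrow> f x = 0) \<and>
        (\<forall>z \<in> Ucal k. \<forall>a \<in> Agrp. \<forall>x \<in> Orb.
            f (dg z \<otimes>\<^bsub>PGL2\<^esub> x \<otimes>\<^bsub>PGL2\<^esub> a) = chi a * f x))"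

definition Rnk :: "int \<Rightarrow> nat \<Rightarrow> 'a::field fls mat2 set set" where
  "Rnk n k = {pcls (fls_const a * fls_X_intpow n, \<beta>, 0, 1) | a \<beta>.
      a \<noteq> 0 \<and> (\<forall>i. fls_nth \<beta> i \<noteq> 0 \<longrightarrow> n - int k + 1 \<le> i \<and> i \<le> n - 1)}"

definition Rset :: "nat \<Rightarrow> 'a::field fls mat2 set set" where
  "Rset k = (\<Union>n. Rnk n k)"

end

theory Submission
  imports Defs
begin

text \<open>
  Right multiplication by \<open>A\<close> acts by column operations. The lower triangular elements of
  \<open>I\<^sup>0\<close>, possibly after \<open>\<sigma>\<close>, make \<open>g\<close> upper triangular, and the upper triangular ones
  \<open>(w, b; 0, 1)\<close> with \<open>w \<in> 1 + t\<O>\<close>, \<open>b \<in> \<O>\<close> bring it to \<open>(c t\<^sup>n, y; 0, 1)\<close> with \<open>y\<close>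
  supported below \<open>n\<close>. If \<open>y\<close> has a nonzero coefficient of index at most \<open>n - k\<close>, the
  equation \<open>c t\<^sup>n b = (w - 1) y\<close> can be solved with \<open>w \<in> 1 + t\<^sup>k\<O>\<close> and \<open>\<psi>(b\<^sub>0) \<noteq> 1\<close>;
  then \<open>(w\<^sup>-\<^sup>1, (w, b; 0, 1))\<close> fixes the point while \<open>\<chi>\<close> is nontrivial on it, so every
  equivariant function vanishes on the orbit. Hence a relevant orbit meets \<open>R\<close>.

  Conversely \<open>A \<subseteq> I\<^sup>0 \<union> \<sigma>I\<^sup>0\<close> and no element of \<open>\<sigma>I\<^sup>0\<close> is upper triangular, so two
  elements of \<open>R\<close> in one orbit are related by \<open>z \<in> 1 + t\<^sup>k\<O>\<close> and \<open>(p, q; 0, 1)\<close> with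
  \<open>p \<in> 1 + t\<O>\<close>, \<open>q \<in> \<O>\<close>. This preserves \<open>c\<close> and \<open>n\<close>, and changes \<open>y\<close> by
  \<open>z c t\<^sup>n q + (z - 1) y\<close>, which vanishes below \<open>n\<close> because \<open>y\<close> is supported above \<open>n - k\<close>.
\<close>

unbundle fps_syntax

text \<open>\<open>Ucal 1\<close>, the principal units \<open>1 + t\<O>\<close>, is used throughout; the default simp rule
  \<open>One_nat_def\<close> would turn it into \<open>Ucal (Suc 0)\<close> and block the rules stated for it.\<close>
declare One_nat_def [simp del]

section \<open>Power series inside Laurent series\<close>

lemma Ocal_iff_subdegree: "x \<in> Ocal \<longleftrightarrow> 0 \<le> fls_subdegree x"
  by (auto simp: Ocal_def intro: fls_subdegree_ge0I)

lemma fls_times_nth_eq0_below: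
  assumes "\<forall>i<L. x $$ i = 0" "\<forall>i<M. y $$ i = 0" "n < L + M"
  shows "(x * y :: 'a::field fls) $$ n = 0"
proof (cases "x = 0 \<or> y = 0")
  case False
  then have "L \<le> fls_subdegree x" "M \<le> fls_subdegree y"
    using assms(1,2) by (auto intro: fls_subdegree_geI)
  then show ?thesis using assms(3) by (intro fls_times_nth_eq0) simp
qed auto

lemma Ocal_0 [simp]: "0 \<in> Ocal" and Ocal_1 [simp]: "1 \<in> Ocal"
  and Ocal_const [simp]: "fls_const c \<in> Ocal" and Ocal_X [simp]: "fls_X \<in> Ocal"
  and Ocal_X_power [simp]: "fls_X ^ m \<in> Ocal"
  by (auto simp: Ocal_def)

lemma Ocal_X_intpow [simp]: "0 \<le> i \<Longrightarrow> fls_X_intpow i \<in> Ocal"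
  by (simp add: Ocal_def)

lemma Ocal_add [simp]: "x \<in> Ocal \<Longrightarrow> y \<in> Ocal \<Longrightarrow> x + y \<in> Ocal"
  and Ocal_uminus [simp]: "x \<in> Ocal \<Longrightarrow> - x \<in> Ocal"
  and Ocal_diff [simp]: "x \<in> Ocal \<Longrightarrow> y \<in> Ocal \<Longrightarrow> x - y \<in> Ocal"
  by (auto simp: Ocal_def)

lemma Ocal_mult [simp]: "x \<in> Ocal \<Longrightarrow> y \<in> Ocal \<Longrightarrow> (x * y :: 'a::field fls) \<in> Ocal"
  unfolding Ocal_def using fls_times_nth_eq0_below[of 0 x 0 y] by simp

lemma Ocal_inverse:
  assumes "x \<in> Ocal" "x $$ 0 \<noteq> 0"
  shows "inverse (x :: 'a::field fls) \<in> Ocal"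
proof -
  have "fls_subdegree x = 0"
    using assms by (meson Ocal_iff_subdegree fls_subdegree_leI order_antisym)
  then show ?thesis by (simp add: Ocal_iff_subdegree)
qed

lemma Ucal_iff: "z \<in> Ucal k \<longleftrightarrow> (\<exists>y\<in>Ocal. z = 1 + fls_X ^ k * y)"
  unfolding Ucal_def by blast

lemma Ucal_subset_Ocal: "Ucal k \<subseteq> Ocal"
  unfolding Ucal_def by auto

lemma Ucal_one_iff: "u \<in> Ucal 1 \<longleftrightarrow> u \<in> Ocal \<and> u $$ 0 = (1 :: 'a::field)"
proof
  assume "u \<in> Ucal 1"
  then show "u \<in> Ocal \<and> u $$ 0 = 1"
    by (auto simp: Ucal_iff fls_X_times_conv_shift(1) Ocal_def)
next
  assume u: "u \<in> Ocal \<and> u $$ 0 = 1"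
  have "u = 1 + fls_X ^ 1 * fls_shift 1 (u - 1)"
    by (rule fls_eqI) (use u in \<open>auto simp: fls_X_times_conv_shift(1)\<close>)
  moreover have "fls_shift 1 (u - 1) \<in> Ocal"
    using u by (auto simp: Ocal_def)
  ultimately show "u \<in> Ucal 1" unfolding Ucal_iff by blast
qed

lemma Ucal_subset_Ucal_one: "1 \<le> k \<Longrightarrow> Ucal k \<subseteq> (Ucal 1 :: 'a::field fls set)"
proof
  fix z :: "'a fls" assume k: "1 \<le> k" and "z \<in> Ucal k"
  then obtain y where y: "y \<in> Ocal" "z = 1 + fls_X ^ k * y"
    unfolding Ucal_iff by blast
  have "fls_X ^ k = fls_X ^ 1 * (fls_X ^ (k - 1) :: 'a fls)"
    using k by (metis le_add_diff_inverse power_add)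
  then have "z = 1 + fls_X ^ 1 * (fls_X ^ (k - 1) * y)"
    unfolding y(2) by (simp add: mult.assoc)
  then show "z \<in> Ucal 1" unfolding Ucal_iff using y(1) by auto
qed

lemma Ucal_nonzero: "1 \<le> k \<Longrightarrow> z \<in> Ucal k \<Longrightarrow> z \<noteq> (0 :: 'a::field fls)"
  by (metis Ucal_one_iff Ucal_subset_Ucal_one fls_zero_nth subsetD zero_neq_one)

lemma one_in_Ucal: "1 \<in> Ucal k"
  unfolding Ucal_iff by (rule bexI[of _ 0]) simp_all

lemma Ucal_mult: "z \<in> Ucal k \<Longrightarrow> z' \<in> Ucal k \<Longrightarrow> z * z' \<in> (Ucal k :: 'a::field fls set)"
proof -
  assume "z \<in> Ucal k" "z' \<in> Ucal k"
  then obtain y y' where "y \<in> Ocal" "y' \<in> Ocal" "z = 1 + fls_X ^ k * y" "z' = 1 + fls_X ^ k * y'"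
    unfolding Ucal_iff by blast
  moreover have "(1 + fls_X ^ k * y) * (1 + fls_X ^ k * y') =
      1 + fls_X ^ k * (y + y' + fls_X ^ k * y * y' :: 'a fls)"
    by (simp add: algebra_simps)
  ultimately show ?thesis unfolding Ucal_iff by auto
qed

lemma Ucal_inverse:
  assumes "1 \<le> k" "z \<in> Ucal k"
  shows "inverse z \<in> (Ucal k :: 'a::field fls set)"
proof -
  obtain y where y: "y \<in> Ocal" "z = 1 + fls_X ^ k * y"
    using assms(2) unfolding Ucal_iff by blast
  have z: "z \<in> Ucal 1" "z \<noteq> 0"
    using Ucal_subset_Ucal_one Ucal_nonzero assms by blast+
  then have "inverse z \<in> Ocal"
    by (simp add: Ucal_one_iff Ocal_inverse)
  moreover have "inverse z = 1 + fls_X ^ k * (- y * inverse z)"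
    using z(2) unfolding y(2) by (simp add: field_simps)
  ultimately show ?thesis
    unfolding Ucal_iff using y(1) by (intro bexI[of _ "- y * inverse z"]) simp_all
qed

lemma fls_eq_const_X_intpow_principal_unit:
  assumes "x \<noteq> (0 :: 'a::field fls)"
  obtains c n u where "c \<noteq> 0" "u \<in> Ucal 1" "x = fls_const c * fls_X_intpow n * u"
proof
  let ?c = "x $$ fls_subdegree x"
  show "?c \<noteq> 0" using assms by simp
  show "fls_const (inverse ?c) * fls_base_factor x \<in> Ucal 1"
    using assms by (simp add: Ucal_one_iff Ocal_def fls_base_factor_nth)
  have "fls_const ?c * fls_X_intpow (fls_subdegree x) * (fls_const (inverse ?c) * fls_base_factor x)
      = (fls_const ?c * fls_const (inverse ?c)) * (fls_base_factor x * fls_X_intpow (fls_subdegree x))"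
    by (simp only: ac_simps)
  also have "\<dots> = x"
    using assms fls_base_factor_X_power_decompose(1)[of x]
    by (simp del: fls_base_factor_def)
  finally show "x = fls_const ?c * fls_X_intpow (fls_subdegree x) *
      (fls_const (inverse ?c) * fls_base_factor x)" ..
qed

lemma const_X_intpow_eq_times_principal_unitD:
  assumes "c \<noteq> 0" "u \<in> Ucal 1"
    and "fls_const c' * fls_X_intpow n' = fls_const c * fls_X_intpow n * (u :: 'a::field fls)"
  shows "c' = c \<and> n' = n"
proof -
  have "(fls_const c * fls_X_intpow n * u) $$ n = c"
    using assms(2) by (simp add: Ucal_one_iff fls_shifted_times_simps)
  then show ?thesis using assms(1) unfolding assms(3)[symmetric] by (simp split: if_splits)
qed

section \<open>\<open>2 \<times> 2\<close> matrices and \<open>PGL(2)\<close>\<close>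

lemma m2mul_assoc: "m2mul (m2mul A B) C = m2mul A (m2mul B C)"
  by (cases A; cases B; cases C) (simp add: m2mul_def algebra_simps)

lemma m2det_m2mul: "m2det (m2mul A B) = m2det A * m2det B"
  by (cases A; cases B) (simp add: m2mul_def m2det_def algebra_simps)

lemma m2mul_m2smult: "m2mul (m2smult s A) (m2smult r B) = m2smult (s * r) (m2mul A B)"
  by (cases A; cases B) (simp add: m2mul_def m2smult_def algebra_simps)

lemma m2smult_m2smult: "m2smult s (m2smult r A) = m2smult (s * r) A"
  by (cases A) (simp add: m2smult_def algebra_simps)

lemma m2smult_1 [simp]: "m2smult 1 A = A"
  by (cases A) (simp add: m2smult_def)

lemma m2mul_id [simp]: "m2mul (1, 0, 0, 1) A = A" "m2mul A (1, 0, 0, 1) = A"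
  by (cases A; simp add: m2mul_def)+

definition m2adj :: "'a::comm_ring_1 mat2 \<Rightarrow> 'a mat2" where
  "m2adj M = (case M of (a, b, c, d) \<Rightarrow> (d, - b, - c, a))"

lemma m2mul_m2adj: "m2mul (m2adj M) M = m2smult (m2det M) (1, 0, 0, 1)"
  by (cases M) (simp add: m2adj_def m2mul_def m2det_def m2smult_def algebra_simps)

lemma m2det_m2adj: "m2det (m2adj M) = m2det M"
  by (cases M) (simp add: m2adj_def m2det_def algebra_simps)

lemma pcls_self: "M \<in> pcls (M :: 'a::field mat2)"
  unfolding pcls_def by (auto intro: exI[of _ 1])

lemma pcls_m2smult:
  assumes "s \<noteq> 0"
  shows "pcls (m2smult s M) = pcls (M :: 'a::field mat2)"
proof (intro Set.set_eqI iffI)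
  fix x assume "x \<in> pcls (m2smult s M)"
  then show "x \<in> pcls M" using assms unfolding pcls_def by (auto simp: m2smult_m2smult)
next
  fix x assume "x \<in> pcls M"
  then obtain r where "r \<noteq> 0" "x = m2smult (r / s) (m2smult s M)"
    using assms unfolding pcls_def by (auto simp: m2smult_m2smult)
  then show "x \<in> pcls (m2smult s M)" using assms unfolding pcls_def by auto
qed

lemma pcls_eqD: "pcls M = pcls N \<Longrightarrow> \<exists>s. s \<noteq> 0 \<and> N = m2smult s (M :: 'a::field mat2)"
  using pcls_self[of N] unfolding pcls_def by blast

lemma PGL2_mult: "X \<otimes>\<^bsub>PGL2\<^esub> Y = {m2mul x y | x y. x \<in> X \<and> y \<in> (Y :: 'a::field mat2 set)}"
  by (simp add: PGL2_def)

lemma PGL2_mult_pcls: "pcls M \<otimes>\<^bsub>PGL2\<^esub> pcls N = pcls (m2mul M N :: 'a::field mat2)"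
proof (intro Set.set_eqI iffI)
  fix x assume "x \<in> pcls M \<otimes>\<^bsub>PGL2\<^esub> pcls N"
  then show "x \<in> pcls (m2mul M N)"
    unfolding PGL2_mult pcls_def by (auto simp: m2mul_m2smult)
next
  fix x assume "x \<in> pcls (m2mul M N)"
  then obtain r where r: "r \<noteq> 0" "x = m2mul (m2smult r M) N"
    unfolding pcls_def using m2mul_m2smult[of _ M 1 N] by auto
  moreover have "m2smult r M \<in> pcls M"
    using r(1) unfolding pcls_def by blast
  ultimately show "x \<in> pcls M \<otimes>\<^bsub>PGL2\<^esub> pcls N"
    unfolding PGL2_mult using pcls_self[of N] by blast
qed

lemma PGL2_one: "\<one>\<^bsub>PGL2\<^esub> = pcls (1, 0, 0, 1)"
  by (simp add: PGL2_def)

lemma PGL2_carrier_iff: "x \<in> carrier PGL2 \<longleftrightarrow> (\<exists>M. x = pcls M \<and> m2det (M :: 'a::field mat2) \<noteq> 0)"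
  by (auto simp: PGL2_def)

lemma pcls_in_PGL2: "m2det M \<noteq> 0 \<Longrightarrow> pcls (M :: 'a::field mat2) \<in> carrier PGL2"
  unfolding PGL2_carrier_iff by blast

lemma group_PGL2: "group (PGL2 :: 'a::field mat2 set monoid)"
proof (rule groupI)
  show "\<one>\<^bsub>PGL2\<^esub> \<in> carrier (PGL2 :: 'a mat2 set monoid)"
    by (simp add: PGL2_one pcls_in_PGL2 m2det_def)
next
  fix x y :: "'a mat2 set"
  assume "x \<in> carrier PGL2" "y \<in> carrier PGL2"
  then show "x \<otimes>\<^bsub>PGL2\<^esub> y \<in> carrier PGL2"
    by (auto simp: PGL2_carrier_iff PGL2_mult_pcls m2det_m2mul simp del: split_paired_Ex)
next
  fix x y z :: "'a mat2 set"
  assume "x \<in> carrier PGL2" "y \<in> carrier PGL2" "z \<in> carrier PGL2"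
  then show "x \<otimes>\<^bsub>PGL2\<^esub> y \<otimes>\<^bsub>PGL2\<^esub> z = x \<otimes>\<^bsub>PGL2\<^esub> (y \<otimes>\<^bsub>PGL2\<^esub> z)"
    by (auto simp: PGL2_carrier_iff PGL2_mult_pcls m2mul_assoc)
next
  fix x :: "'a mat2 set"
  assume "x \<in> carrier PGL2"
  then show "\<one>\<^bsub>PGL2\<^esub> \<otimes>\<^bsub>PGL2\<^esub> x = x"
    by (auto simp: PGL2_carrier_iff PGL2_mult_pcls PGL2_one)
next
  fix x :: "'a mat2 set"
  assume "x \<in> carrier PGL2"
  then obtain M where M: "x = pcls M" "m2det M \<noteq> 0"
    unfolding PGL2_carrier_iff by blast
  then have "pcls (m2adj M) \<otimes>\<^bsub>PGL2\<^esub> x = \<one>\<^bsub>PGL2\<^esub>" "pcls (m2adj M) \<in> carrier PGL2"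
    by (simp_all add: PGL2_mult_pcls m2mul_m2adj pcls_m2smult PGL2_one pcls_in_PGL2 m2det_m2adj)
  then show "\<exists>y\<in>carrier PGL2. y \<otimes>\<^bsub>PGL2\<^esub> x = \<one>\<^bsub>PGL2\<^esub>" by blast
qed

interpretation G: group "PGL2 :: 'a::field mat2 set monoid"
  by (rule group_PGL2)

lemma PGL2_inv_pcls: "m2det M \<noteq> 0 \<Longrightarrow> inv\<^bsub>PGL2\<^esub> (pcls M) = pcls (m2adj (M :: 'a::field mat2))"
  by (rule G.inv_equality)
    (simp_all add: PGL2_mult_pcls m2mul_m2adj pcls_m2smult PGL2_one pcls_in_PGL2 m2det_m2adj)

lemma pcls_upper_normalize:
  "S \<noteq> 0 \<Longrightarrow> pcls (P, Q, 0, S) = pcls (P / S, Q / S, 0, 1 :: 'a::field)"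
  using pcls_m2smult[of "inverse S" "(P, Q, 0, S)"] by (simp add: m2smult_def field_simps)

section \<open>The group \<open>A\<close>\<close>

definition I0_mat :: "'a::field fls \<Rightarrow> 'a fls \<Rightarrow> 'a fls \<Rightarrow> 'a fls \<Rightarrow> 'a fls mat2" where
  "I0_mat a b c d = (1 + fls_X * a, b, fls_X * c, 1 + fls_X * d)"

definition I0_mats :: "'a::field fls mat2 set" where
  "I0_mats = {I0_mat a b c d | a b c d. a \<in> Ocal \<and> b \<in> Ocal \<and> c \<in> Ocal \<and> d \<in> Ocal}"

definition sigma_mat :: "'a::field fls mat2" where
  "sigma_mat = (0, 1, fls_X, 0)"

lemma I0_eq: "I0 = pcls ` I0_mats"
  unfolding I0_def I0_mats_def I0_mat_def by blast

lemma sigma_eq: "sigma = pcls sigma_mat"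
  by (simp add: sigma_def sigma_mat_def)

lemma I0_matsI: "a \<in> Ocal \<Longrightarrow> b \<in> Ocal \<Longrightarrow> c \<in> Ocal \<Longrightarrow> d \<in> Ocal \<Longrightarrow> I0_mat a b c d \<in> I0_mats"
  unfolding I0_mats_def by blast

lemma I0_matsE:
  assumes "M \<in> I0_mats"
  obtains a b c d where "a \<in> Ocal" "b \<in> Ocal" "c \<in> Ocal" "d \<in> Ocal" "M = I0_mat a b c d"
  using assms unfolding I0_mats_def by blast

lemma I0_mats_mult: "M \<in> I0_mats \<Longrightarrow> N \<in> I0_mats \<Longrightarrow> m2mul M N \<in> I0_mats"
proof (elim I0_matsE)
  fix a b c d a' b' c' d' :: "'a fls"
  assume "a \<in> Ocal" "b \<in> Ocal" "c \<in> Ocal" "d \<in> Ocal" "a' \<in> Ocal" "b' \<in> Ocal" "c' \<in> Ocal" "d' \<in> Ocal"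
  moreover have "m2mul (I0_mat a b c d) (I0_mat a' b' c' d') =
    I0_mat (a + a' + fls_X * a * a' + b * c') ((1 + fls_X * a) * b' + b * (1 + fls_X * d'))
      (c * (1 + fls_X * a') + (1 + fls_X * d) * c') (c * b' + d + d' + fls_X * d * d')"
    unfolding I0_mat_def m2mul_def by (simp add: algebra_simps)
  ultimately show "M = I0_mat a b c d \<Longrightarrow> N = I0_mat a' b' c' d' \<Longrightarrow> m2mul M N \<in> I0_mats"
    by (simp add: I0_matsI)
qed

lemma m2det_I0_mats: "M \<in> I0_mats \<Longrightarrow> m2det M \<in> Ucal 1"
proof (elim I0_matsE)
  fix a b c d :: "'a fls"
  assume "a \<in> Ocal" "b \<in> Ocal" "c \<in> Ocal" "d \<in> Ocal" "M = I0_mat a b c d"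
  moreover have "m2det (I0_mat a b c d) = 1 + fls_X * (a + d + fls_X * a * d - b * c)"
    by (simp add: I0_mat_def m2det_def algebra_simps)
  ultimately show "m2det M \<in> Ucal 1"
    unfolding Ucal_iff power_one_right by auto
qed

lemma m2det_I0_mats_nonzero: "M \<in> I0_mats \<Longrightarrow> m2det M \<noteq> 0"
  by (metis m2det_I0_mats Ucal_nonzero order_refl)

lemma m2adj_I0_mat: "m2adj (I0_mat a b c d) = I0_mat d (- b) (- c) a"
  by (simp add: m2adj_def I0_mat_def)

lemma m2adj_I0_mats: "M \<in> I0_mats \<Longrightarrow> m2adj M \<in> I0_mats"
  by (elim I0_matsE) (simp add: m2adj_I0_mat I0_matsI)

lemma I0_mat_times_sigma_mat: "m2mul (I0_mat a b c d) sigma_mat = m2mul sigma_mat (I0_mat d c b a)"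
  by (simp add: I0_mat_def sigma_mat_def m2mul_def algebra_simps)

lemma I0_mats_times_sigma_mat:
  "M \<in> I0_mats \<Longrightarrow> \<exists>M'\<in>I0_mats. m2mul M sigma_mat = m2mul sigma_mat M'"
  by (elim I0_matsE) (metis I0_mat_times_sigma_mat I0_matsI)

lemma sigma_mat_squared: "m2mul sigma_mat sigma_mat = m2smult fls_X (1, 0, 0, 1)"
  by (simp add: sigma_mat_def m2mul_def m2smult_def)

lemma m2det_sigma_mat: "m2det sigma_mat = - fls_X"
  by (simp add: sigma_mat_def m2det_def)

definition A_mats :: "'a::field fls mat2 set" where
  "A_mats = I0_mats \<union> m2mul sigma_mat ` I0_mats"

lemma I0_mats_mult_A_mats: "M \<in> I0_mats \<Longrightarrow> N \<in> A_mats \<Longrightarrow> m2mul M N \<in> A_mats"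
proof (unfold A_mats_def, elim UnE imageE)
  fix N' assume "M \<in> I0_mats" "N' \<in> I0_mats" "N = m2mul sigma_mat N'"
  moreover obtain M' where "M' \<in> I0_mats" "m2mul M sigma_mat = m2mul sigma_mat M'"
    using I0_mats_times_sigma_mat[OF \<open>M \<in> I0_mats\<close>] by blast
  ultimately have "m2mul M N = m2mul sigma_mat (m2mul M' N')" "m2mul M' N' \<in> I0_mats"
    by (simp_all add: m2mul_assoc[symmetric] I0_mats_mult)
  then show "m2mul M N \<in> I0_mats \<union> m2mul sigma_mat ` I0_mats"
    by blast
qed (simp add: I0_mats_mult)

lemma sigma_mat_mult_A_mats: "N \<in> A_mats \<Longrightarrow> \<exists>P\<in>A_mats. pcls (m2mul sigma_mat N) = pcls P"
proof (unfold A_mats_def, elim UnE imageE)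
  fix N' assume "N' \<in> I0_mats" "N = m2mul sigma_mat N'"
  then have "pcls (m2mul sigma_mat N) = pcls N'"
    by (simp add: m2mul_assoc[symmetric] sigma_mat_squared m2mul_m2smult[of _ _ 1, simplified]
        pcls_m2smult)
  then show "\<exists>P\<in>I0_mats \<union> m2mul sigma_mat ` I0_mats. pcls (m2mul sigma_mat N) = pcls P"
    using \<open>N' \<in> I0_mats\<close> by blast
qed blast

lemma pcls_A_mats_mult:
  assumes "x \<in> pcls ` A_mats" "y \<in> pcls ` A_mats"
  shows "x \<otimes>\<^bsub>PGL2\<^esub> y \<in> pcls ` A_mats"
proof -
  obtain M N where MN: "x = pcls M" "y = pcls N" "M \<in> A_mats" "N \<in> A_mats"
    using assms by blast
  have "\<exists>P\<in>A_mats. pcls (m2mul M N) = pcls P"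
  proof (cases "M \<in> I0_mats")
    case True
    then show ?thesis using I0_mats_mult_A_mats MN(4) by blast
  next
    case False
    then obtain M' where "M' \<in> I0_mats" "M = m2mul sigma_mat M'"
      using MN(3) unfolding A_mats_def by blast
    then show ?thesis
      using sigma_mat_mult_A_mats[OF I0_mats_mult_A_mats[OF _ MN(4)]] by (simp add: m2mul_assoc)
  qed
  then show ?thesis
    unfolding MN PGL2_mult_pcls by blast
qed

lemma I0_subset_pcls_A_mats: "I0 \<subseteq> pcls ` A_mats"
  unfolding A_mats_def I0_eq by blast

lemma sigma_in_pcls_A_mats: "sigma \<in> pcls ` A_mats"
proof -
  have "sigma = pcls (m2mul sigma_mat (I0_mat 0 0 0 0))"
    by (simp add: sigma_eq I0_mat_def)
  then show ?thesis
    unfolding A_mats_def by (blast intro: I0_matsI Ocal_0)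
qed

lemma PGL2_inv_sigma: "inv\<^bsub>PGL2\<^esub> sigma = sigma"
proof -
  have "inv\<^bsub>PGL2\<^esub> sigma = pcls (m2adj sigma_mat)"
    by (simp add: sigma_eq PGL2_inv_pcls m2det_sigma_mat)
  also have "m2adj sigma_mat = m2smult (- 1) sigma_mat"
    by (simp add: m2adj_def sigma_mat_def m2smult_def)
  finally show ?thesis
    by (simp add: pcls_m2smult sigma_eq)
qed

lemma Agrp_subset_pcls_A_mats: "Agrp \<subseteq> pcls ` (A_mats :: 'a::field fls mat2 set)"
proof
  fix x :: "'a fls mat2 set" assume "x \<in> Agrp"
  then show "x \<in> pcls ` A_mats"
    unfolding Agrp_def
  proof (induction rule: generate.induct)
    case one
    have "\<one>\<^bsub>PGL2\<^esub> = pcls (I0_mat 0 0 0 0)"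
      by (simp add: PGL2_one I0_mat_def)
    then show ?case
      unfolding A_mats_def by (blast intro: I0_matsI Ocal_0)
  next
    case (incl h)
    then show ?case
      using I0_subset_pcls_A_mats sigma_in_pcls_A_mats by blast
  next
    case (inv h)
    have "inv\<^bsub>PGL2\<^esub> (pcls M) \<in> pcls ` A_mats" if "M \<in> I0_mats" for M :: "'a fls mat2"
      using that unfolding A_mats_def
      by (simp add: PGL2_inv_pcls m2det_I0_mats_nonzero m2adj_I0_mats)
    moreover have "inv\<^bsub>PGL2\<^esub> sigma \<in> pcls ` (A_mats :: 'a fls mat2 set)"
      by (simp add: PGL2_inv_sigma sigma_in_pcls_A_mats)
    ultimately show ?case
      using inv unfolding I0_eq by blast
  next
    case (eng h1 h2)
    then show ?case by (simp add: pcls_A_mats_mult)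
  qed
qed

lemma Agrp_upper_triangularD:
  assumes "pcls (p, q, 0, 1) \<in> Agrp"
  shows "p \<in> Ucal 1" "q \<in> Ocal"
proof -
  obtain P where P: "P \<in> A_mats" "pcls (p, q, 0, 1) = pcls P"
    using assms Agrp_subset_pcls_A_mats by blast
  then obtain s where s: "s \<noteq> 0" "P = (s * p, s * q, 0, s)"
    by (auto dest!: pcls_eqD simp: m2smult_def)
  have "P \<notin> m2mul sigma_mat ` I0_mats"
  proof
    assume "P \<in> m2mul sigma_mat ` I0_mats"
    then obtain a b c d where "a \<in> Ocal" "P = m2mul sigma_mat (I0_mat a b c d)"
      by (auto elim: I0_matsE)
    then have "fls_X * (1 + fls_X * a) = 0" "1 + fls_X * a \<in> Ucal 1"
      using s(2) by (auto simp: sigma_mat_def I0_mat_def m2mul_def Ucal_iff)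
    then show False
      using Ucal_nonzero[of 1 "1 + fls_X * a"] by simp
  qed
  then obtain a b c d where "a \<in> Ocal" "b \<in> Ocal" "d \<in> Ocal" "P = I0_mat a b c d"
    using P(1) unfolding A_mats_def by (auto elim: I0_matsE)
  then have sp: "s * p \<in> Ucal 1" and sq: "s * q \<in> Ocal" and s1: "s \<in> Ucal 1"
    using s(2) by (auto simp: I0_mat_def Ucal_iff)
  have inv_s: "inverse s \<in> Ucal 1"
    using Ucal_inverse[OF order_refl s1] .
  show "p \<in> Ucal 1"
    using Ucal_mult[OF inv_s sp] s(1) by (simp add: field_simps)
  show "q \<in> Ocal"
    using Ocal_mult[OF subsetD[OF Ucal_subset_Ocal inv_s] sq] s(1) by (simp add: field_simps)
qed

lemma generators_in_PGL2: "insert sigma I0 \<subseteq> carrier (PGL2 :: 'a::field fls mat2 set monoid)"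
  unfolding sigma_eq I0_eq
  by (auto intro!: pcls_in_PGL2 simp: m2det_sigma_mat m2det_I0_mats_nonzero)

lemma subgroup_Agrp: "subgroup Agrp (PGL2 :: 'a::field fls mat2 set monoid)"
  unfolding Agrp_def by (rule G.generate_is_subgroup[OF generators_in_PGL2])

lemma Agrp_mult: "a \<in> Agrp \<Longrightarrow> b \<in> Agrp \<Longrightarrow> a \<otimes>\<^bsub>PGL2\<^esub> b \<in> Agrp"
  by (rule subgroup.m_closed[OF subgroup_Agrp])

lemma Agrp_inv: "a \<in> Agrp \<Longrightarrow> inv\<^bsub>PGL2\<^esub> a \<in> Agrp"
  by (rule subgroup.m_inv_closed[OF subgroup_Agrp])

lemma Agrp_in_PGL2: "a \<in> Agrp \<Longrightarrow> a \<in> carrier PGL2"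
  using subgroup.subset[OF subgroup_Agrp] by blast

lemma one_in_Agrp: "\<one>\<^bsub>PGL2\<^esub> \<in> Agrp"
  by (rule subgroup.one_closed[OF subgroup_Agrp])

lemma sigma_in_Agrp: "sigma \<in> Agrp"
  unfolding Agrp_def by (rule generate.incl) simp

lemma I0_mat_in_Agrp:
  "a \<in> Ocal \<Longrightarrow> b \<in> Ocal \<Longrightarrow> c \<in> Ocal \<Longrightarrow> d \<in> Ocal \<Longrightarrow> pcls (I0_mat a b c d) \<in> Agrp"
  unfolding Agrp_def I0_eq by (rule generate.incl) (blast intro: I0_matsI)

lemma upper_triangular_in_Agrp: "w \<in> Ucal 1 \<Longrightarrow> b \<in> Ocal \<Longrightarrow> pcls (w, b, 0, 1) \<in> Agrp"
  unfolding Ucal_iff power_one_right using I0_mat_in_Agrp[of _ b 0 0] by (auto simp: I0_mat_def)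

lemma lower_triangular_in_Agrp: "c \<in> Ocal \<Longrightarrow> pcls (1, 0, fls_X * c, 1) \<in> Agrp"
  using I0_mat_in_Agrp[of 0 0 c 0] by (simp add: I0_mat_def)

lemma sigma_lower_triangular_in_Agrp: "c \<in> Ocal \<Longrightarrow> pcls (fls_X * c, 1, fls_X, 0) \<in> Agrp"
  using Agrp_mult[OF sigma_in_Agrp lower_triangular_in_Agrp]
  by (simp add: sigma_eq sigma_mat_def PGL2_mult_pcls m2mul_def)

lemma character_upper_triangular:
  assumes "\<forall>a \<in> Ocal. \<forall>b \<in> Ocal. \<forall>c \<in> Ocal. \<forall>d \<in> Ocal.
      \<chi> (pcls (1 + fls_X * a, b, fls_X * c, 1 + fls_X * d)) = \<psi> (fls_nth b 0 + fls_nth c 0)"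
    and "w \<in> Ucal 1" "b \<in> Ocal"
  shows "\<chi> (pcls (w, b, 0, 1)) = \<psi> (b $$ 0)"
  using assms unfolding Ucal_iff power_one_right by (force dest: bspec[of _ _ 0])

lemma dg_mult: "dg z \<otimes>\<^bsub>PGL2\<^esub> dg z' = dg (z * z')"
  by (simp add: dg_def PGL2_mult_pcls m2mul_def)

lemma dg_1: "dg 1 = \<one>\<^bsub>PGL2\<^esub>"
  by (simp add: dg_def PGL2_one)

lemma dg_in_PGL2: "z \<noteq> 0 \<Longrightarrow> dg z \<in> carrier PGL2"
  unfolding dg_def by (rule pcls_in_PGL2) (simp add: m2det_def)

lemma PGL2_inv_dg: "z \<noteq> 0 \<Longrightarrow> inv\<^bsub>PGL2\<^esub> (dg z) = dg (inverse (z :: 'a::field fls))"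
  by (rule G.inv_equality) (simp_all add: dg_mult dg_1 dg_in_PGL2)

lemma orbitkI: "z \<in> Ucal k \<Longrightarrow> a \<in> Agrp \<Longrightarrow> dg z \<otimes>\<^bsub>PGL2\<^esub> g \<otimes>\<^bsub>PGL2\<^esub> a \<in> orbitk k g"
  unfolding orbitk_def by blast

lemma orbitkE:
  assumes "x \<in> orbitk k g"
  obtains z a where "z \<in> Ucal k" "a \<in> Agrp" "x = dg z \<otimes>\<^bsub>PGL2\<^esub> g \<otimes>\<^bsub>PGL2\<^esub> a"
  using assms unfolding orbitk_def by blast

lemma right_mult_in_orbitk:
  "g \<in> carrier PGL2 \<Longrightarrow> a \<in> Agrp \<Longrightarrow> g \<otimes>\<^bsub>PGL2\<^esub> a \<in> orbitk k g"
  using orbitkI[OF one_in_Ucal] by (metis G.l_one dg_1)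

lemma self_in_orbitk: "g \<in> carrier PGL2 \<Longrightarrow> g \<in> orbitk k g"
  using right_mult_in_orbitk[OF _ one_in_Agrp] by (metis G.r_one)

lemma orbitk_relate:
  assumes "1 \<le> k" "g \<in> carrier PGL2" "x \<in> orbitk k g" "y \<in> orbitk k g"
  obtains z a where "z \<in> Ucal k" "a \<in> Agrp" "y = dg z \<otimes>\<^bsub>PGL2\<^esub> x \<otimes>\<^bsub>PGL2\<^esub> a"
proof -
  obtain z1 a1 where x: "z1 \<in> Ucal k" "a1 \<in> Agrp" "x = dg z1 \<otimes>\<^bsub>PGL2\<^esub> g \<otimes>\<^bsub>PGL2\<^esub> a1"
    using assms(3) by (rule orbitkE)
  obtain z2 a2 where y: "z2 \<in> Ucal k" "a2 \<in> Agrp" "y = dg z2 \<otimes>\<^bsub>PGL2\<^esub> g \<otimes>\<^bsub>PGL2\<^esub> a2"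
    using assms(4) by (rule orbitkE)
  have z1: "z1 \<noteq> 0" "dg z1 \<in> carrier PGL2"
    using Ucal_nonzero[OF assms(1) x(1)] dg_in_PGL2 by auto
  have z2: "dg z2 \<in> carrier PGL2"
    using Ucal_nonzero[OF assms(1) y(1)] dg_in_PGL2 by auto
  have a: "a1 \<in> carrier PGL2" "a2 \<in> carrier PGL2"
    using x(2) y(2) Agrp_in_PGL2 by auto
  have dg_quotient: "dg (z2 * inverse z1) = dg z2 \<otimes>\<^bsub>PGL2\<^esub> inv\<^bsub>PGL2\<^esub> (dg z1)"
    using z1 by (simp add: PGL2_inv_dg dg_mult)
  have cancel: "inv\<^bsub>PGL2\<^esub> (dg z1) \<otimes>\<^bsub>PGL2\<^esub> (dg z1 \<otimes>\<^bsub>PGL2\<^esub> w) = w"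
    "a1 \<otimes>\<^bsub>PGL2\<^esub> (inv\<^bsub>PGL2\<^esub> a1 \<otimes>\<^bsub>PGL2\<^esub> w) = w" if "w \<in> carrier PGL2" for w
    using that z1 a by (simp_all add: G.m_assoc[symmetric])
  have "y = dg (z2 * inverse z1) \<otimes>\<^bsub>PGL2\<^esub> x \<otimes>\<^bsub>PGL2\<^esub> (inv\<^bsub>PGL2\<^esub> a1 \<otimes>\<^bsub>PGL2\<^esub> a2)"
    using z1 z2 a assms(2) by (simp add: dg_quotient x(3) y(3) G.m_assoc cancel)
  then show ?thesis
    using that Ucal_mult[OF y(1) Ucal_inverse[OF assms(1) x(1)]] Agrp_mult[OF Agrp_inv[OF x(2)] y(2)]
    by blast
qed

section \<open>Normal forms in an orbit\<close>

lemma upper_triangular_if_m2mul_lower_left_0: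
  assumes "m2det M \<noteq> 0" "m2det N \<noteq> 0" "pcls N \<in> Agrp" "m2mul M N = (P, Q, 0, S)"
  shows "\<exists>a\<in>Agrp. \<exists>x y. x \<noteq> 0 \<and> pcls M \<otimes>\<^bsub>PGL2\<^esub> a = pcls (x, y, 0, 1)"
proof -
  have "m2det (P, Q, 0, S) \<noteq> 0"
    using assms(1,2,4) m2det_m2mul[of M N] by simp
  then have "P / S \<noteq> 0" "S \<noteq> 0"
    by (auto simp: m2det_def)
  moreover have "pcls M \<otimes>\<^bsub>PGL2\<^esub> pcls N = pcls (P / S, Q / S, 0, 1)"
    using assms(4) by (simp add: PGL2_mult_pcls pcls_upper_normalize[OF \<open>S \<noteq> 0\<close>])
  ultimately show ?thesis
    using assms(3) by blast
qed

lemma exists_Agrp_upper_triangular: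
  assumes "g \<in> carrier PGL2"
  obtains a x y where "a \<in> Agrp" "x \<noteq> 0" "g \<otimes>\<^bsub>PGL2\<^esub> a = pcls (x, y, 0, 1 :: 'a::field fls)"
proof -
  obtain p q r s where M: "g = pcls (p, q, r, s)" "m2det (p, q, r, s) \<noteq> 0"
    using assms unfolding PGL2_carrier_iff by auto
  have "\<exists>a\<in>Agrp. \<exists>x y. x \<noteq> 0 \<and> g \<otimes>\<^bsub>PGL2\<^esub> a = pcls (x, y, 0, 1)"
  proof (cases "r = 0 \<or> (s \<noteq> 0 \<and> fls_subdegree s < fls_subdegree r)")
    case True
    define c where "c = - (r / (s * fls_X))"
    have "c \<in> Ocal"
    proof (cases "r = 0")
      case False
      with True have "fls_subdegree (r / (s * fls_X)) = fls_subdegree r - (fls_subdegree s + 1)"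
        by (simp add: fls_divide_subdegree)
      with False True show ?thesis
        by (simp add: c_def Ocal_iff_subdegree)
    qed (simp add: c_def)
    moreover have "r + s * (fls_X * c) = 0"
      using True by (auto simp: c_def field_simps)
    ultimately show ?thesis
      unfolding M(1) using upper_triangular_if_m2mul_lower_left_0[OF M(2), of "(1, 0, fls_X * c, 1)"]
      by (simp add: m2det_def lower_triangular_in_Agrp m2mul_def)
  next
    case False
    define c where "c = - (s / r)"
    have "c \<in> Ocal"
      using False by (cases "s = 0") (auto simp: c_def Ocal_iff_subdegree fls_divide_subdegree)
    moreover have "r * (fls_X * c) + s * fls_X = 0"
      using False by (simp add: c_def field_simps)
    ultimately show ?thesis
      unfolding M(1) using upper_triangular_if_m2mul_lower_left_0[OF M(2), of "(fls_X * c, 1, fls_X, 0)"]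
      by (simp add: m2det_def sigma_lower_triangular_in_Agrp m2mul_def)
  qed
  then show ?thesis using that by blast
qed

lemma upper_triangular_normal_form:
  assumes "x \<noteq> (0 :: 'a::field fls)"
  obtains a c n y' where "a \<in> Agrp" "c \<noteq> 0" "\<forall>i\<ge>n. y' $$ i = 0"
    "pcls (x, y, 0, 1) \<otimes>\<^bsub>PGL2\<^esub> a = pcls (fls_const c * fls_X_intpow n, y', 0, 1)"
proof -
  obtain c n u where c: "c \<noteq> 0" and u: "u \<in> Ucal 1" and x: "x = fls_const c * fls_X_intpow n * u"
    using assms by (rule fls_eq_const_X_intpow_principal_unit)
  define w where "w = inverse u"
  define R where "R = fps_to_fls (fls_regpart (fls_shift n y))"
  define b where "b = - (fls_const (inverse c) * w * R)"
  have w: "w \<in> Ucal 1"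
    unfolding w_def using Ucal_inverse[OF order_refl u] .
  moreover have "R \<in> Ocal"
    by (simp add: R_def Ocal_def)
  moreover have "w \<in> Ocal"
    using w Ucal_subset_Ocal by blast
  ultimately have b: "b \<in> Ocal"
    by (simp add: b_def)
  have "u \<noteq> 0"
    using Ucal_nonzero[OF order_refl u] .
  then have xw: "x * w = fls_const c * fls_X_intpow n"
    by (simp add: x w_def)
  have "x * b = - (fls_const (inverse c) * R * (x * w))"
    by (simp add: b_def algebra_simps)
  also have "\<dots> = - (fls_const (inverse c) * fls_const c * (fls_X_intpow n * R))"
    unfolding xw by (simp only: ac_simps)
  finally have xb: "x * b = - (fls_X_intpow n * R)"
    using c by simp
  have "\<forall>i\<ge>n. (y - fls_X_intpow n * R) $$ i = 0"
    by (simp add: R_def fls_X_intpow_times_conv_shift)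
  moreover have "pcls (x, y, 0, 1) \<otimes>\<^bsub>PGL2\<^esub> pcls (w, b, 0, 1) =
      pcls (fls_const c * fls_X_intpow n, y - fls_X_intpow n * R, 0, 1)"
    by (simp add: PGL2_mult_pcls m2mul_def xw xb)
  ultimately show ?thesis
    using that upper_triangular_in_Agrp[OF w b] c by blast
qed

lemma exists_Agrp_normal_form:
  assumes "g \<in> carrier PGL2"
  obtains a c n y where "a \<in> Agrp" "c \<noteq> 0" "\<forall>i\<ge>n. y $$ i = 0"
    "g \<otimes>\<^bsub>PGL2\<^esub> a = pcls (fls_const c * fls_X_intpow n, y, 0, 1 :: 'a::field fls)"
proof -
  obtain a0 x y where a0: "a0 \<in> Agrp" "x \<noteq> 0" "g \<otimes>\<^bsub>PGL2\<^esub> a0 = pcls (x, y, 0, 1 :: 'a fls)"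
    using assms by (rule exists_Agrp_upper_triangular)
  obtain a1 c n y' where a1: "a1 \<in> Agrp" "c \<noteq> 0" "\<forall>i\<ge>n. y' $$ i = 0"
    "pcls (x, y, 0, 1) \<otimes>\<^bsub>PGL2\<^esub> a1 = pcls (fls_const c * fls_X_intpow n, y', 0, 1)"
    using a0(2) by (rule upper_triangular_normal_form)
  have "g \<otimes>\<^bsub>PGL2\<^esub> (a0 \<otimes>\<^bsub>PGL2\<^esub> a1) = pcls (fls_const c * fls_X_intpow n, y', 0, 1)"
    using assms a0 a1 by (simp add: G.m_assoc[symmetric] Agrp_in_PGL2)
  then show ?thesis
    using that Agrp_mult[OF a0(1) a1(1)] a1(2,3) by blast
qed

section \<open>Relevant orbits meet \<open>R\<close>\<close>

lemma relevant_stabilizer_character: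
  assumes "relevant k \<chi> (orbitk k g)" "g \<in> carrier PGL2" "\<forall>a\<in>Agrp. \<chi> a \<noteq> 0"
    and "x \<in> orbitk k g" "z \<in> Ucal k" "a \<in> Agrp" "dg z \<otimes>\<^bsub>PGL2\<^esub> x \<otimes>\<^bsub>PGL2\<^esub> a = x"
  shows "\<chi> a = 1"
proof (rule ccontr)
  assume "\<chi> a \<noteq> 1"
  obtain f where f_nonzero: "\<exists>x\<in>orbitk k g. f x \<noteq> 0"
    and f_equivariant: "\<forall>z\<in>Ucal k. \<forall>a\<in>Agrp. \<forall>x\<in>orbitk k g.
      f (dg z \<otimes>\<^bsub>PGL2\<^esub> x \<otimes>\<^bsub>PGL2\<^esub> a) = \<chi> a * f x"
    using assms(1) unfolding relevant_def by blast
  have f_orbit: "f y = \<chi> a' * f g" if "y = dg z' \<otimes>\<^bsub>PGL2\<^esub> g \<otimes>\<^bsub>PGL2\<^esub> a'" "z' \<in> Ucal k" "a' \<in> Agrp"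
    for y z' a'
    using that f_equivariant self_in_orbitk[OF assms(2)] by blast
  have "f x = \<chi> a * f x"
    using f_equivariant assms(4-7) by metis
  then have "f x = 0"
    using \<open>\<chi> a \<noteq> 1\<close> by simp
  moreover obtain z1 a1 where "z1 \<in> Ucal k" "a1 \<in> Agrp" "x = dg z1 \<otimes>\<^bsub>PGL2\<^esub> g \<otimes>\<^bsub>PGL2\<^esub> a1"
    using assms(4) by (rule orbitkE)
  ultimately have "f g = 0"
    using f_orbit assms(3) by force
  obtain y where "y \<in> orbitk k g" "f y \<noteq> 0"
    using f_nonzero by blast
  then obtain z2 a2 where "z2 \<in> Ucal k" "a2 \<in> Agrp" "y = dg z2 \<otimes>\<^bsub>PGL2\<^esub> g \<otimes>\<^bsub>PGL2\<^esub> a2"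
    by (auto elim: orbitkE)
  then show False
    using f_orbit \<open>f g = 0\<close> \<open>f y \<noteq> 0\<close> by simp
qed

lemma upper_triangular_stabilizer:
  assumes "w \<noteq> 0" "C * b = (w - 1) * y"
  shows "dg (inverse w) \<otimes>\<^bsub>PGL2\<^esub> pcls (C, y, 0, 1) \<otimes>\<^bsub>PGL2\<^esub> pcls (w, b, 0, 1) =
    pcls (C, y, 0, 1 :: 'a::field fls)"
proof -
  have "inverse w * C * b + inverse w * y = inverse w * (C * b + y)"
    by (simp add: algebra_simps)
  also have "\<dots> = y"
    using assms by (simp add: algebra_simps)
  finally have upper_right: "inverse w * C * b + inverse w * y = y" .
  have upper_left: "inverse w * C * w = C"
    using assms(1) by simp
  show ?thesis
    by (simp add: dg_def PGL2_mult_pcls m2mul_def upper_left upper_right)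
qed

text \<open>With \<open>m\<close> the valuation of \<open>y\<close>, the witness is \<open>w = 1 + t\<^sup>k \<alpha> t\<^bsup>n-k-m\<^esup>\<close>, integral
  exactly because \<open>m \<le> n - k\<close>, and \<open>b = (w - 1) y / (c t\<^sup>n)\<close>, whose constant term
  \<open>\<alpha> y\<^sub>m / c\<close> is arbitrary.\<close>
lemma stabilizer_of_deep_coefficient:
  assumes "1 \<le> k" "c \<noteq> 0" "y $$ i \<noteq> 0" "i \<le> n - int k"
  obtains w b where "w \<in> Ucal k" "b \<in> Ocal" "b $$ 0 = t"
    "dg (inverse w) \<otimes>\<^bsub>PGL2\<^esub> pcls (fls_const c * fls_X_intpow n, y, 0, 1) \<otimes>\<^bsub>PGL2\<^esub> pcls (w, b, 0, 1) =
      pcls (fls_const c * fls_X_intpow n, y, 0, 1 :: 'a::field fls)"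
proof -
  define m where "m = fls_subdegree y"
  have "y \<noteq> 0" "m \<le> i"
    using assms(3) unfolding m_def by (auto intro: fls_subdegree_leI)
  define \<alpha> where "\<alpha> = c * t / y $$ m"
  define v where "v = fls_const \<alpha> * fls_X_intpow (n - int k - m)"
  define w where "w = 1 + fls_X ^ k * v"
  define b where "b = fls_const (\<alpha> / c) * fls_shift m y"
  have "v \<in> Ocal"
    unfolding v_def using \<open>m \<le> i\<close> assms(4) by (intro Ocal_mult Ocal_const Ocal_X_intpow) simp
  then have w: "w \<in> Ucal k"
    unfolding w_def Ucal_iff by blast
  have "b \<in> Ocal"
    by (simp add: b_def m_def Ocal_def)
  moreover have "b $$ 0 = t"
    using \<open>y \<noteq> 0\<close> assms(2) by (simp add: b_def \<alpha>_def m_def)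
  moreover have "fls_const c * fls_X_intpow n * b = (w - 1) * y"
    using assms(2)
    by (simp add: b_def w_def v_def fls_X_power_conv_shift_1 fls_shifted_times_simps mult_ac)
  ultimately show ?thesis
    using that w upper_triangular_stabilizer Ucal_nonzero[OF assms(1) w] by blast
qed

lemma relevant_normal_form_in_Rset:
  assumes k: "1 \<le> k" and rel: "relevant k \<chi> (orbitk k g)" and g: "g \<in> carrier PGL2"
    and chi_nz: "\<forall>a \<in> Agrp. \<chi> a \<noteq> 0"
    and chi_I0: "\<forall>a \<in> Ocal. \<forall>b \<in> Ocal. \<forall>c \<in> Ocal. \<forall>d \<in> Ocal.
      \<chi> (pcls (1 + fls_X * a, b, fls_X * c, 1 + fls_X * d)) = \<psi> (fls_nth b 0 + fls_nth c 0)"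
    and psi_nontriv: "\<exists>t. \<psi> t \<noteq> 1"
    and r: "pcls (fls_const c * fls_X_intpow n, y, 0, 1) \<in> orbitk k g" "c \<noteq> 0" "\<forall>i\<ge>n. y $$ i = 0"
  shows "pcls (fls_const c * fls_X_intpow n, y, 0, 1) \<in> Rset k"
proof -
  have "n - int k + 1 \<le> i" if yi: "y $$ i \<noteq> 0" for i
  proof (rule ccontr)
    assume "\<not> n - int k + 1 \<le> i"
    obtain t where t: "\<psi> t \<noteq> 1"
      using psi_nontriv by blast
    have "i \<le> n - int k"
      using \<open>\<not> n - int k + 1 \<le> i\<close> by simp
    obtain w b where w: "w \<in> Ucal k" and b: "b \<in> Ocal" "b $$ 0 = t"
      and stab: "dg (inverse w) \<otimes>\<^bsub>PGL2\<^esub> pcls (fls_const c * fls_X_intpow n, y, 0, 1)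
          \<otimes>\<^bsub>PGL2\<^esub> pcls (w, b, 0, 1) = pcls (fls_const c * fls_X_intpow n, y, 0, 1)"
      by (rule stabilizer_of_deep_coefficient[OF k r(2) yi \<open>i \<le> n - int k\<close>])
    have "w \<in> Ucal 1"
      using w Ucal_subset_Ucal_one[OF k] by blast
    then have "\<chi> (pcls (w, b, 0, 1)) = \<psi> t"
      using character_upper_triangular[OF chi_I0 _ b(1)] b(2) by simp
    moreover have "\<chi> (pcls (w, b, 0, 1)) = 1"
      using relevant_stabilizer_character[OF rel g chi_nz r(1) Ucal_inverse[OF k w] _ stab]
        upper_triangular_in_Agrp[OF \<open>w \<in> Ucal 1\<close> b(1)] by blast
    ultimately show False
      using t by simp
  qed
  moreover have "i \<le> n - 1" if "y $$ i \<noteq> 0" for i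
    using that r(3) by (meson not_le zle_diff1_eq)
  ultimately show ?thesis
    unfolding Rset_def Rnk_def using r(2) by blast
qed

section \<open>Uniqueness of the representative\<close>

lemma upper_triangular_Agrp_relation:
  assumes "pcls (C', \<beta>', 0, 1) = dg z \<otimes>\<^bsub>PGL2\<^esub> pcls (C, \<beta>, 0, 1) \<otimes>\<^bsub>PGL2\<^esub> a" "a \<in> Agrp"
  obtains p q where "p \<in> Ucal 1" "q \<in> Ocal" "C' = z * C * p" "\<beta>' = z * (C * q + \<beta>)"
proof -
  obtain m1 m2 m3 m4 where a: "a = pcls (m1, m2, m3, m4 :: 'a::field fls)"
    using Agrp_in_PGL2[OF assms(2)] unfolding PGL2_carrier_iff by auto
  have product: "pcls (C', \<beta>', 0, 1) =
      pcls (z * C * m1 + z * \<beta> * m3, z * C * m2 + z * \<beta> * m4, m3, m4)"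
    using assms(1) by (simp add: a dg_def PGL2_mult_pcls m2mul_def)
  obtain s where "s \<noteq> 0" and "(C', \<beta>', 0, 1) =
      m2smult s (z * C * m1 + z * \<beta> * m3, z * C * m2 + z * \<beta> * m4, m3, m4)"
    using pcls_eqD[OF product[symmetric]] by blast
  then have e: "C' = s * (z * C * m1 + z * \<beta> * m3)"
      "\<beta>' = s * (z * C * m2 + z * \<beta> * m4)" "s * m3 = 0" "s * m4 = 1"
    by (simp_all add: m2smult_def)
  then have "m3 = 0"
    using \<open>s \<noteq> 0\<close> by simp
  have "a = pcls (s * m1, s * m2, 0, 1)"
    using pcls_m2smult[OF \<open>s \<noteq> 0\<close>, of "(m1, m2, m3, m4)"] e(4) \<open>m3 = 0\<close>
    by (simp add: a m2smult_def)
  then have "s * m1 \<in> Ucal 1" "s * m2 \<in> Ocal"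
    using Agrp_upper_triangularD assms(2) by auto
  moreover have "C' = z * C * (s * m1)"
    using e(1) \<open>m3 = 0\<close> by (simp add: algebra_simps)
  moreover have "\<beta>' = z * (C * (s * m2) + \<beta>)"
    using e(2,4) by (simp add: algebra_simps)
  ultimately show ?thesis
    using that by blast
qed

lemma Rnk_upper_right_unique:
  assumes "z \<in> Ucal k" "q \<in> Ocal" "\<beta>' = z * (fls_const c * fls_X_intpow n * q + \<beta>)"
    and "\<forall>i. \<beta> $$ i \<noteq> 0 \<longrightarrow> n - int k + 1 \<le> i \<and> i \<le> n - 1"
    and "\<forall>i. \<beta>' $$ i \<noteq> 0 \<longrightarrow> n - int k + 1 \<le> i \<and> i \<le> n - 1"
  shows "\<beta>' = (\<beta> :: 'a::field fls)"
proof (rule fls_eqI)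
  fix i
  obtain v where v: "v \<in> Ocal" "z = 1 + fls_X ^ k * v"
    using assms(1) unfolding Ucal_iff by blast
  have "\<beta>' - \<beta> = fls_X_intpow n * (fls_const c * z * q) + (fls_X ^ k * v) * \<beta>"
    using assms(3) v(2) by (simp add: algebra_simps)
  moreover have "(fls_X_intpow n * (fls_const c * z * q)) $$ i = 0" if "i < n"
  proof -
    have "fls_const c * z * q \<in> Ocal"
      using subsetD[OF Ucal_subset_Ocal assms(1)] assms(2) by simp
    then show ?thesis
      using that by (intro fls_times_nth_eq0_below[of n _ 0]) (simp_all add: Ocal_def)
  qed
  moreover have "((fls_X ^ k * v) * \<beta>) $$ i = 0" if "i < n"
  proof (rule fls_times_nth_eq0_below[of "int k" _ "n - int k + 1"])
    show "\<forall>j<int k. (fls_X ^ k * v) $$ j = 0"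
      using v(1) by (intro allI impI fls_times_nth_eq0_below[of "int k" _ 0]) (auto simp: Ocal_def)
  qed (use that assms(4) in auto)
  ultimately have "(\<beta>' - \<beta>) $$ i = 0" if "i < n"
    using that by simp
  then show "\<beta>' $$ i = \<beta> $$ i"
    using assms(4,5) by (cases "i < n") force+
qed

lemma Rset_unique_in_orbitk:
  assumes k: "1 \<le> k" and g: "g \<in> carrier PGL2"
    and r: "r \<in> Rset k" "r \<in> orbitk k g" and r': "r' \<in> Rset k" "r' \<in> orbitk k g"
  shows "r' = r"
proof -
  obtain z a where z: "z \<in> Ucal k" and a: "a \<in> Agrp" and rel: "r' = dg z \<otimes>\<^bsub>PGL2\<^esub> r \<otimes>\<^bsub>PGL2\<^esub> a"
    using orbitk_relate[OF k g r(2) r'(2)] .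
  obtain n c \<beta> where R: "r = pcls (fls_const c * fls_X_intpow n, \<beta>, 0, 1)" "c \<noteq> 0"
    "\<forall>i. \<beta> $$ i \<noteq> 0 \<longrightarrow> n - int k + 1 \<le> i \<and> i \<le> n - 1"
    using r(1) unfolding Rset_def Rnk_def by blast
  obtain n' c' \<beta>' where R': "r' = pcls (fls_const c' * fls_X_intpow n', \<beta>', 0, 1)"
    "\<forall>i. \<beta>' $$ i \<noteq> 0 \<longrightarrow> n' - int k + 1 \<le> i \<and> i \<le> n' - 1"
    using r'(1) unfolding Rset_def Rnk_def by blast
  obtain p q where p: "p \<in> Ucal 1" and q: "q \<in> Ocal"
    and e: "fls_const c' * fls_X_intpow n' = z * (fls_const c * fls_X_intpow n) * p"
      "\<beta>' = z * (fls_const c * fls_X_intpow n * q + \<beta>)"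
    using upper_triangular_Agrp_relation[OF rel[unfolded R(1) R'(1)] a] .
  have "z * p \<in> Ucal 1"
    using Ucal_mult[OF subsetD[OF Ucal_subset_Ucal_one[OF k] z] p] .
  then have "c' = c \<and> n' = n"
    using e(1) R(2) by (intro const_X_intpow_eq_times_principal_unitD) (simp_all add: mult_ac)
  moreover have "\<beta>' = \<beta>"
    using Rnk_upper_right_unique[OF z q e(2) R(3)] R'(2) calculation by simp
  ultimately show ?thesis
    using R(1) R'(1) by simp
qed

theorem mainTheorem3:
  fixes k :: nat
    and \<psi> :: "'a::{field, finite} \<Rightarrow> complex"
    and \<chi> :: "'a fls mat2 set \<Rightarrow> complex"
  assumes k: "k \<ge> 1"
    and psi_add: "\<forall>x y. \<psi> (x + y) = \<psi> x * \<psi> y"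
    and psi_nz: "\<forall>x. \<psi> x \<noteq> 0"
    and psi_nontriv: "\<exists>x. \<psi> x \<noteq> 1"
    and chi_nz: "\<forall>a \<in> Agrp. \<chi> a \<noteq> 0"
    and chi_hom: "\<forall>a \<in> Agrp. \<forall>b \<in> Agrp. \<chi> (a \<otimes>\<^bsub>PGL2\<^esub> b) = \<chi> a * \<chi> b"
    and chi_I0: "\<forall>a \<in> Ocal. \<forall>b \<in> Ocal. \<forall>c \<in> Ocal. \<forall>d \<in> Ocal.
        \<chi> (pcls (1 + fls_X * a, b, fls_X * c, 1 + fls_X * d)) = \<psi> (fls_nth b 0 + fls_nth c 0)"
    and chi_sigma: "\<chi> sigma = 1"
  shows "\<forall>Orb. relevant k \<chi> Orb \<longrightarrow> (\<exists>!r. r \<in> Rset k \<and> r \<in> Orb)"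
proof (intro allI impI)
  fix Orb assume rel: "relevant k \<chi> Orb"
  then obtain g where g: "g \<in> carrier PGL2" and Orb: "Orb = orbitk k g"
    unfolding relevant_def by blast
  obtain a c n y where "a \<in> Agrp" "c \<noteq> 0" "\<forall>i\<ge>n. y $$ i = 0"
    and ga: "g \<otimes>\<^bsub>PGL2\<^esub> a = pcls (fls_const c * fls_X_intpow n, y, 0, 1)"
    using g by (rule exists_Agrp_normal_form)
  moreover have "pcls (fls_const c * fls_X_intpow n, y, 0, 1) \<in> Orb"
    unfolding Orb ga[symmetric] using g \<open>a \<in> Agrp\<close> by (rule right_mult_in_orbitk)
  ultimately have "pcls (fls_const c * fls_X_intpow n, y, 0, 1) \<in> Rset k \<inter> Orb"
    using relevant_normal_form_in_Rset[OF k rel[unfolded Orb] g chi_nz chi_I0 psi_nontriv]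
    unfolding Orb by blast
  then show "\<exists>!r. r \<in> Rset k \<and> r \<in> Orb"
    using Rset_unique_in_orbitk[OF k g] unfolding Orb by blast
qed

end
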